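(* Under the assumptions below, the eigenvalues $\widetilde{\lambda}_n$ of the differential operator $\mathbf{L}$ associated with the polynomials $q_n$ orthonormal with respect to the discrete Sobolev inner product $(f,g)_S$ satisfy: If $j=2r$, $$\lim_{n\to+\infty}\frac{\widetilde{\lambda}_{2r+2n}}{n^{2(a_1r+b_1)+3}}=\frac{8\gamma MC_{r,1}^2}{(2(a_1r+b_1)+3)(2(a_1r+b_1)+1)}\ \text{if }\gamma\neq0,\qquad \lim_{n\to+\infty}\frac{\widetilde{\lambda}_{2r+2n}}{n^{2(a_1r+b_1+1)}}=\frac{\delta MC_{r,1}^2}{(a_1r+b_1+1)(2(a_1r+b_1)+1)}\ \text{if }\gamma=0.$$ If $j=2r+1$, $$\lim_{n\to+\infty}\frac{\widetilde{\lambda}_{2r+1+2n}}{n^{2(a_2r+b_2)+3}}=\frac{8\gamma MC_{r,2}^2}{(2(a_2r+b_2)+3)(2(a_2r+b_2)+1)}\ \text{if }\gamma\neq0,\qquad \lim_{n\to+\infty}\frac{\widetilde{\lambda}_{2r+1+2n}}{n^{2(a_2r+b_2+1)}}=\frac{\delta MC_{r,2}^2}{(a_2r+b_2+1)(2(a_2r+b_2)+1)}\ \text{if }\gamma=0.$$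
   Context: Let $\mu$ be a classical measure on the real line symmetric with respect to the origin, $d\mu(x)=w(x)dx$ (e.g. Hermite weight $e^{-x^2}$ or Gegenbauer weight $(1-x^2)^{\alpha}$, $\alpha>-1$), take $c=0$, and consider the discrete Sobolev inner product $(f,g)_S=\int f(x)g(x)\,d\mu+Mf^{(j)}(0)g^{(j)}(0)$ with $j\in\mathbb{N}\cup\{0\}$ and $M>0$. Let $\{p_n\}_{n\ge0}$ be the orthonormal polynomials with respect to $\mu$, eigenfunctions of the operator $\mathbf{B}=\sigma(x)\mathcal{D}^2+\tau(x)\mathcal{D}$ with eigenvalues $\lambda_n$, and let $\{q_n\}_{n\ge0}$ be the orthonormal polynomials with respect to $(f,g)_S$, which are eigenfunctions of a differential operator $\mathbf{L}=\sum_{i\ge1}r_i(x)\mathcal{D}^i$ ($\deg r_i\le i$) with eigenvalues $\widetilde{\lambda}_n=\lambda_n+M\alpha_n$, where $\alpha_i=0$ for $i\in\{0,\dots,j\}$ and $\alpha_{j+2n}=\sum_{i=1}^n(\lambda_{j+2i}-\lambda_{j+2i-2})K_{j+2i-1}^{(j,j)}(0,0)$ for $n\ge1$, with $K_n^{(r,s)}(x,y)=\sum_{i=0}^np_i^{(r)}(x)p_i^{(s)}(y)$. Assume $p_{2n}^{(2k)}(0)\approx C_{k,1}(-1)^n n^{a_1k+b_1}$ and $p_{2n+1}^{(2k+1)}(0)\approx C_{k,2}(-1)^n n^{a_2k+b_2}$ (where $a_n\approx b_n$ means $a_n/b_n\to1$), with constants $C_{k,1},C_{k,2}$ independent of $n$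 and $2(a_1k+b_1)+1>0$, $2(a_2k+b_2)+1>0$, and assume $\lambda_n=\gamma n^2+\delta n$ with $\gamma,\delta\in\mathbb{R}$. *)

theory Defs
  imports "HOL-Analysis.Analysis" "HOL-Computational_Algebra.Polynomial"
begin

definition kernel :: "(nat \<Rightarrow> real poly) \<Rightarrow> nat \<Rightarrow> nat \<Rightarrow> nat \<Rightarrow> real \<Rightarrow> real \<Rightarrow> real" where
  "kernel p n r s x y = (\<Sum>i=0..n. poly ((pderiv ^^ r) (p i)) x * poly ((pderiv ^^ s) (p i)) y)"

text \<open>alpha_{j+2n} = sum_{i=1}^n (lambda_{j+2i} - lambda_{j+2i-2}) K_{j+2i-1}^{(j,j)}(0,0)
  (for n = 0 this is the empty sum, agreeing with alpha_j = 0).\<close>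
definition sob_alpha :: "(nat \<Rightarrow> real poly) \<Rightarrow> (nat \<Rightarrow> real) \<Rightarrow> nat \<Rightarrow> nat \<Rightarrow> real" where
  "sob_alpha p lam j n = (\<Sum>i=1..n. (lam (j + 2*i) - lam (j + 2*i - 2)) * kernel p (j + 2*i - 1) j j 0 0)"

definition lam_tilde :: "(nat \<Rightarrow> real poly) \<Rightarrow> (nat \<Rightarrow> real) \<Rightarrow> real \<Rightarrow> nat \<Rightarrow> nat \<Rightarrow> real" where
  "lam_tilde p lam M j n = lam (j + 2*n) + M * sob_alpha p lam j n"

end

theory Submission
  imports Defs "HOL-Real_Asymp.Real_Asymp"
begin

(* Symmetry of the weight forces p_n(-x) = (-1)^n p_n(x): in the expansion of p_n(-x) in the basis
   p_0, ..., p_n, the coefficient of p_m is the integral of p_n(-x) p_m(x), which by symmetry equals the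
   integral of p_n(x) p_m(-x) and so vanishes for m < n. Hence p_m^(j)(0) = 0 unless m - j is even and
   nonnegative, and only every other term of the kernel survives: K_(j+2i+1)^(j,j)(0,0) is the sum of
   (p_(j+2l)^(j)(0))^2 over l <= i, which by Stolz-Cesaro grows like C^2 i^(2e+1) / (2e+1) when
   |p_(j+2l)^(j)(0)| ~ |C| l^e. Since lambda_(j+2i+2) - lambda_(j+2i) = gamma (4j+8i+4) + 2 delta,
   a second application of Stolz-Cesaro to alpha_(j+2n) gives growth of order n^(2e+3) if gamma /= 0 and
   n^(2e+2) if gamma = 0, which dominates lambda_(j+2n). *)

lemma stolz_cesaro_0:
  fixes x y :: "nat \<Rightarrow> real"
  assumes y_pos: "\<And>i. y i > 0"
    and y_sum: "filterlim (\<lambda>n. \<Sum>i<n. y i) at_top sequentially"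
    and ratio: "(\<lambda>i. x i / y i) \<longlonglongrightarrow> 0"
  shows "(\<lambda>n. (\<Sum>i<n. x i) / (\<Sum>i<n. y i)) \<longlonglongrightarrow> 0"
proof (rule LIMSEQ_I)
  fix \<epsilon> :: real assume "\<epsilon> > 0"
  then obtain N where N: "\<And>i. i \<ge> N \<Longrightarrow> \<bar>x i / y i\<bar> < \<epsilon>/2"
    using LIMSEQ_D[OF ratio, of "\<epsilon>/2"] by auto
  define K where "K = \<bar>\<Sum>i<N. x i\<bar>"
  have "\<forall>\<^sub>F n in sequentially. (\<Sum>i<n. y i) > 2 * K / \<epsilon> \<and> n \<ge> N"
    using y_sum by (simp add: filterlim_at_top_dense eventually_conj eventually_ge_at_top)
  then obtain n0 where n0: "\<And>n. n \<ge> n0 \<Longrightarrow> (\<Sum>i<n. y i) > 2 * K / \<epsilon> \<and> n \<ge> N"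
    by (auto simp: eventually_sequentially)
  show "\<exists>n0. \<forall>n\<ge>n0. norm ((\<Sum>i<n. x i) / (\<Sum>i<n. y i) - 0) < \<epsilon>"
  proof (intro exI allI impI)
    fix n assume "n \<ge> n0"
    with n0 have big: "2 * K / \<epsilon> < (\<Sum>i<n. y i)" and "N \<le> n" by auto
    have K_small: "K < \<epsilon>/2 * (\<Sum>i<n. y i)"
      using big \<open>\<epsilon> > 0\<close> by (simp add: field_simps)
    have "\<bar>\<Sum>i<n. x i\<bar> = \<bar>(\<Sum>i<N. x i) + (\<Sum>i=N..<n. x i)\<bar>"
      using \<open>N \<le> n\<close> by (metis atLeast0LessThan sum.atLeastLessThan_concat zero_le)
    also have "\<dots> \<le> K + (\<Sum>i=N..<n. \<bar>x i\<bar>)"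
      unfolding K_def by (intro order_trans[OF abs_triangle_ineq] add_left_mono sum_abs)
    also have "(\<Sum>i=N..<n. \<bar>x i\<bar>) \<le> (\<Sum>i=N..<n. \<epsilon>/2 * y i)"
      using N y_pos by (intro sum_mono) (simp add: abs_divide pos_divide_less_eq less_imp_le)
    also have "\<dots> \<le> (\<Sum>i<n. \<epsilon>/2 * y i)"
      using y_pos \<open>\<epsilon> > 0\<close> by (intro sum_mono2) (auto intro: less_imp_le)
    also have "\<dots> = \<epsilon>/2 * (\<Sum>i<n. y i)"
      by (simp add: sum_distrib_left)
    finally have "\<bar>\<Sum>i<n. x i\<bar> < \<epsilon> * (\<Sum>i<n. y i)"
      using K_small by linarith
    moreover have "(\<Sum>i<n. y i) > 0"
      using big \<open>\<epsilon> > 0\<close> K_def by (smt (verit) divide_nonneg_pos)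
    ultimately show "norm ((\<Sum>i<n. x i) / (\<Sum>i<n. y i) - 0) < \<epsilon>"
      by (simp add: abs_divide pos_divide_less_eq)
  qed
qed

lemma stolz_cesaro:
  fixes x y :: "nat \<Rightarrow> real"
  assumes y_pos: "\<And>i. y i > 0"
    and y_sum: "filterlim (\<lambda>n. \<Sum>i<n. y i) at_top sequentially"
    and ratio: "(\<lambda>i. x i / y i) \<longlonglongrightarrow> L"
  shows "(\<lambda>n. (\<Sum>i<n. x i) / (\<Sum>i<n. y i)) \<longlonglongrightarrow> L"
proof -
  have "(\<lambda>i. x i / y i - L) \<longlonglongrightarrow> 0"
    using ratio by (simp add: LIM_zero)
  moreover have "x i / y i - L = (x i - L * y i) / y i" for i
    using y_pos[of i] by (simp add: field_simps)
  ultimately have "(\<lambda>n. (\<Sum>i<n. x i - L * y i) / (\<Sum>i<n. y i)) \<longlonglongrightarrow> 0"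
    by (intro stolz_cesaro_0[OF y_pos y_sum]) simp
  then have "(\<lambda>n. (\<Sum>i<n. x i - L * y i) / (\<Sum>i<n. y i) + L) \<longlonglongrightarrow> L"
    using tendsto_add[OF _ tendsto_const, of _ 0 sequentially L] by simp
  moreover have "\<forall>\<^sub>F n in sequentially. (\<Sum>i<n. x i - L * y i) / (\<Sum>i<n. y i) + L = (\<Sum>i<n. x i) / (\<Sum>i<n. y i)"
    using y_sum[unfolded filterlim_at_top_dense, rule_format, of 0]
    by eventually_elim (simp add: sum_subtractf sum_distrib_left[symmetric] field_simps)
  ultimately show ?thesis by (rule Lim_transform_eventually)
qed

lemma sum_powr_asymp:
  fixes g :: "nat \<Rightarrow> real"
  assumes s: "s > -1" and g: "(\<lambda>i. g i / real i powr s) \<longlonglongrightarrow> L"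
  shows "(\<lambda>n. (\<Sum>i<n. g i) / real n powr (s + 1)) \<longlonglongrightarrow> L / (s + 1)"
proof -
  define y where "y i = real (Suc i) powr (s + 1) - real i powr (s + 1)" for i
  have y_pos: "y i > 0" for i
    unfolding y_def using s by (simp add: powr_less_mono2)
  have y_sum: "(\<Sum>i<n. y i) = real n powr (s + 1)" for n
    unfolding y_def using sum_lessThan_telescope[of "\<lambda>i. real i powr (s + 1)" n] s by simp
  have "(\<lambda>i. real i powr s / ((1 + real i) powr (s + 1) - real i powr (s + 1))) \<longlonglongrightarrow> inverse (s + 1)"
    using s by real_asymp
  then have "(\<lambda>i. g i / real i powr s * (real i powr s / y i)) \<longlonglongrightarrow> L * inverse (s + 1)"
    unfolding y_def by (intro tendsto_mult g) (simp add: add.commute)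
  moreover have "\<forall>\<^sub>F i in sequentially. g i / real i powr s * (real i powr s / y i) = g i / y i"
    using eventually_gt_at_top[of 0] by eventually_elim simp
  ultimately have "(\<lambda>i. g i / y i) \<longlonglongrightarrow> L / (s + 1)"
    by (simp add: Lim_transform_eventually divide_inverse)
  moreover have "filterlim (\<lambda>n. \<Sum>i<n. y i) at_top sequentially"
    unfolding y_sum using s by real_asymp
  ultimately have "(\<lambda>n. (\<Sum>i<n. g i) / (\<Sum>i<n. y i)) \<longlonglongrightarrow> L / (s + 1)"
    by (intro stolz_cesaro[of y] y_pos)
  then show ?thesis
    unfolding y_sum .
qed

lemma LIMSEQ_powr_shift:
  fixes f :: "nat \<Rightarrow> real"
  assumes "(\<lambda>n. f n / real n powr a) \<longlonglongrightarrow> L"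
  shows "(\<lambda>n. f (n + k) / real n powr a) \<longlonglongrightarrow> L"
proof -
  have "(\<lambda>n. f (n + k) / real (n + k) powr a * ((real n + real k) powr a / real n powr a)) \<longlonglongrightarrow> L * 1"
    using LIMSEQ_ignore_initial_segment[OF assms, of k]
    by (intro tendsto_mult) (simp, real_asymp)
  moreover have "\<forall>\<^sub>F n in sequentially.
      f (n + k) / real (n + k) powr a * ((real n + real k) powr a / real n powr a) = f (n + k) / real n powr a"
    using eventually_gt_at_top[of 0] by eventually_elim simp
  ultimately show ?thesis by (simp add: Lim_transform_eventually)
qed

lemma LIMSEQ_power2_powr:
  fixes h :: "nat \<Rightarrow> real"
  assumes lim: "(\<lambda>n. h n / (C * (-1) ^ n * real n powr e)) \<longlonglongrightarrow> 1"
  shows "(\<lambda>n. (h n)\<^sup>2 / real n powr (2 * e)) \<longlonglongrightarrow> C\<^sup>2"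
proof -
  have "C \<noteq> 0"
    using lim LIMSEQ_unique[OF tendsto_const, of 0 1] by fastforce
  moreover have "(real n powr e)\<^sup>2 = real n powr (2 * e)" "((-1::real) ^ n)\<^sup>2 = 1" for n
    by (simp_all add: power2_eq_square powr_add[symmetric] power_mult_distrib[symmetric])
  ultimately have "(h n / (C * (-1) ^ n * real n powr e))\<^sup>2 * C\<^sup>2 = (h n)\<^sup>2 / real n powr (2 * e)" for n
    by (simp add: power_divide power_mult_distrib)
  moreover have "(\<lambda>n. (h n / (C * (-1) ^ n * real n powr e))\<^sup>2 * C\<^sup>2) \<longlonglongrightarrow> 1\<^sup>2 * C\<^sup>2"
    by (intro tendsto_intros lim)
  ultimately show ?thesis by simp
qed

lemma integral_density_reflect:
  fixes w g :: "real \<Rightarrow> real"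
  assumes w_meas: "w \<in> borel_measurable borel" and w_nonneg: "\<And>x. w x \<ge> 0"
    and w_sym: "\<And>x. w (- x) = w x" and g: "g \<in> borel_measurable borel"
  shows "(\<integral>x. g (- x) \<partial>density lborel (\<lambda>x. ennreal (w x))) = (\<integral>x. g x \<partial>density lborel (\<lambda>x. ennreal (w x)))"
proof -
  have "(\<integral>x. g (- x) \<partial>density lborel (\<lambda>x. ennreal (w x))) = (\<integral>x. w (- x) * g (- x) \<partial>lborel)"
    using g w_meas w_nonneg w_sym by (simp add: integral_density)
  also have "\<dots> = (\<integral>x. w x * g x \<partial>lborel)"
    using lborel_integral_real_affine[of "-1" "\<lambda>x. w x * g x" 0] by simp
  also have "\<dots> = (\<integral>x. g x \<partial>density lborel (\<lambda>x. ennreal (w x)))"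
    using g w_meas w_nonneg by (simp add: integral_density)
  finally show ?thesis .
qed

locale orthonormal_polys =
  fixes \<mu> :: "real measure" and p :: "nat \<Rightarrow> real poly"
  assumes degree_p: "degree (p n) = n"
    and integrable_p_mult: "integrable \<mu> (\<lambda>x. poly (p m) x * poly (p n) x)"
    and orthonormal: "(\<integral>x. poly (p m) x * poly (p n) x \<partial>\<mu>) = (if m = n then 1 else 0)"
begin

lemma p_nonzero: "p n \<noteq> 0"
  using orthonormal[of n n] by auto

lemma lead_coeff_p_nonzero: "coeff (p n) n \<noteq> 0"
  using p_nonzero degree_p[of n] by (metis leading_coeff_0_iff)

lemma poly_in_span_p:
  assumes "degree f \<le> N"
  shows "\<exists>c. f = (\<Sum>k\<le>N. smult (c k) (p k))"
  using assms
proof (induction N arbitrary: f)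
  case 0
  then obtain a where "f = [:a:]" by (metis degree_eq_zeroE le_zero_eq)
  moreover obtain b where "p 0 = [:b:]" using degree_p[of 0] by (metis degree_eq_zeroE)
  ultimately have "f = smult (a / b) (p 0)"
    using p_nonzero[of 0] by simp
  then show ?case by auto
next
  case (Suc N)
  define l where "l = coeff f (Suc N) / coeff (p (Suc N)) (Suc N)"
  have "degree (f - smult l (p (Suc N))) \<le> N"
  proof (rule degree_le, intro allI impI)
    fix i assume "N < i"
    then consider "i = Suc N" | "Suc N < i" by linarith
    then show "coeff (f - smult l (p (Suc N))) i = 0"
    proof cases
      case 1
      then show ?thesis using lead_coeff_p_nonzero by (simp add: l_def)
    next
      case 2
      then show ?thesis using Suc.prems degree_p by (simp add: coeff_eq_0)
    qed
  qed
  then obtain c where "f - smult l (p (Suc N)) = (\<Sum>k\<le>N. smult (c k) (p k))"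
    using Suc.IH by blast
  then have "f = (\<Sum>k\<le>Suc N. smult ((c(Suc N := l)) k) (p k))"
    by (simp add: algebra_simps)
  then show ?case by blast
qed

lemma integral_sum_p_mult_p:
  "(\<integral>x. poly (\<Sum>k\<le>N. smult (c k) (p k)) x * poly (p m) x \<partial>\<mu>) = (if m \<le> N then c m else 0)"
proof -
  have "(\<integral>x. poly (\<Sum>k\<le>N. smult (c k) (p k)) x * poly (p m) x \<partial>\<mu>)
      = (\<Sum>k\<le>N. c k * (\<integral>x. poly (p k) x * poly (p m) x \<partial>\<mu>))"
    by (simp add: poly_sum sum_distrib_right mult.assoc integrable_p_mult)
  also have "\<dots> = (if m \<le> N then c m else 0)"
    by (simp add: orthonormal if_distrib sum.delta cong: if_cong)
  finally show ?thesis .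
qed

lemma integral_p_orthogonal_lower_degree:
  assumes "degree f < n"
  shows "(\<integral>x. poly f x * poly (p n) x \<partial>\<mu>) = 0"
proof -
  obtain c where "f = (\<Sum>k\<le>degree f. smult (c k) (p k))"
    using poly_in_span_p by blast
  then show ?thesis
    using assms integral_sum_p_mult_p[of c "degree f" n] by simp
qed

lemma pcompose_p_reflect:
  assumes symmetric: "\<And>g :: real \<Rightarrow> real. g \<in> borel_measurable borel \<Longrightarrow> (\<integral>x. g (- x) \<partial>\<mu>) = (\<integral>x. g x \<partial>\<mu>)"
  shows "pcompose (p n) [:0, -1:] = smult ((-1) ^ n) (p n)"
proof -
  define q where "q k = pcompose (p k) [:0, -1:]" for k
  have degree_q: "degree (q k) = k" for k
    by (simp add: q_def degree_pcompose degree_p)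
  have poly_q: "poly (q k) x = poly (p k) (- x)" for k x
    by (simp add: q_def poly_pcompose)
  obtain c where c: "q n = (\<Sum>k\<le>n. smult (c k) (p k))"
    using poly_in_span_p degree_q by (metis order_refl)
  have "c m = 0" if "m < n" for m
  proof -
    have "c m = (\<integral>x. poly (p n) (- x) * poly (q m) (- x) \<partial>\<mu>)"
      using integral_sum_p_mult_p[of c n m] that by (simp add: c[symmetric] poly_q mult.commute)
    also have "\<dots> = (\<integral>x. poly (q m) x * poly (p n) x \<partial>\<mu>)"
      using symmetric[of "\<lambda>x. poly (q m) x * poly (p n) x"]
      by (simp add: mult.commute borel_measurable_continuous_onI continuous_intros)
    also have "\<dots> = 0"
      using that degree_q by (simp add: integral_p_orthogonal_lower_degree)
    finally show ?thesis .
  qed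
  then have "q n = smult (c n) (p n)"
    using c by (simp add: atMost_Suc[symmetric] lessThan_Suc_atMost[symmetric] lessThan_Suc)
  moreover have "coeff (q n) n = (-1) ^ n * coeff (p n) n"
    by (simp add: q_def coeff_pcompose_linear)
  ultimately show ?thesis
    using lead_coeff_p_nonzero q_def by simp
qed

end

lemma poly_higher_pderiv_0: "poly ((pderiv ^^ j) P) 0 = fact j * coeff P j"
  by (simp add: poly_0_coeff_0 coeff_higher_pderiv pochhammer_fact)

lemma coeff_eq_0_if_parity:
  fixes P :: "'a :: {idom, ring_char_0} poly"
  assumes "pcompose P [:0, -1:] = smult ((-1) ^ n) P" and "odd (n + k)"
  shows "coeff P k = 0"
proof -
  have "(-1) ^ k * coeff P k = (-1) ^ n * coeff P k"
    using arg_cong[OF assms(1), of "\<lambda>Q. coeff Q k"] by (simp add: coeff_pcompose_linear)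
  moreover have "(-1 :: 'a) ^ k \<noteq> (-1) ^ n"
    using assms(2) by (auto simp: minus_one_power_iff)
  ultimately show ?thesis by simp
qed

lemma kernel_diag_0_eq_sum:
  assumes parity: "\<And>n. pcompose (p n) [:0, -1:] = smult ((-1) ^ n) (p n)"
    and degree_p: "\<And>n. degree (p n) = n"
  shows "kernel p (j + 2*i + 1) j j 0 0 = (\<Sum>l\<le>i. (poly ((pderiv ^^ j) (p (j + 2*l))) 0)\<^sup>2)"
proof -
  define f where "f m = poly ((pderiv ^^ j) (p m)) 0" for m
  have f_0: "f m = 0" if "m < j \<or> odd (m + j)" for m
    using that coeff_eq_0_if_parity[OF parity] degree_p
    by (auto simp: f_def poly_higher_pderiv_0 coeff_eq_0)
  have "(\<Sum>m<j + 2*i. (f m)\<^sup>2) = (\<Sum>l<i. (f (j + 2*l))\<^sup>2)" for i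
  proof (induction i)
    case 0
    then show ?case using f_0 by simp
  next
    case (Suc i)
    have "j + 2 * Suc i = Suc (Suc (j + 2*i))" by simp
    then show ?case using Suc.IH f_0[of "Suc (j + 2*i)"] by simp
  qed
  from this[of "Suc i"] show ?thesis
    by (simp add: kernel_def f_def power2_eq_square atLeast0AtMost lessThan_Suc_atMost[symmetric])
qed

lemma kernel_diag_0_asymp:
  fixes e Csq :: real
  assumes parity: "\<And>n. pcompose (p n) [:0, -1:] = smult ((-1) ^ n) (p n)"
    and degree_p: "\<And>n. degree (p n) = n"
    and e: "2 * e + 1 > 0"
    and deriv: "(\<lambda>l. (poly ((pderiv ^^ j) (p (j + 2*l))) 0)\<^sup>2 / real l powr (2 * e)) \<longlonglongrightarrow> Csq"
  shows "(\<lambda>i. kernel p (j + 2*i + 1) j j 0 0 / real i powr (2 * e + 1)) \<longlonglongrightarrow> Csq / (2 * e + 1)"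
  unfolding kernel_diag_0_eq_sum[OF parity degree_p]
  using LIMSEQ_powr_shift[OF sum_powr_asymp[OF _ deriv], of 1] e
  by (simp add: lessThan_Suc_atMost)

lemma sob_alpha_eq_sum_lessThan:
  "sob_alpha p lam j n = (\<Sum>i<n. (lam (j + 2*i + 2) - lam (j + 2*i)) * kernel p (j + 2*i + 1) j j 0 0)"
  unfolding sob_alpha_def by (induction n) (simp_all add: algebra_simps)

lemma lam_tilde_asymp:
  fixes c k d s :: real
  assumes lam_diff: "(\<lambda>i. (lam (j + 2*i + 2) - lam (j + 2*i)) / real i powr d) \<longlonglongrightarrow> c"
    and kernel: "(\<lambda>i. kernel p (j + 2*i + 1) j j 0 0 / real i powr s) \<longlonglongrightarrow> k"
    and lam: "(\<lambda>n. lam (j + 2*n) / real n powr (s + d + 1)) \<longlonglongrightarrow> 0"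
    and sd: "s + d > -1"
  shows "(\<lambda>n. lam_tilde p lam M j n / real n powr (s + d + 1)) \<longlonglongrightarrow> M * (c * k / (s + d + 1))"
proof -
  define a where "a i = (lam (j + 2*i + 2) - lam (j + 2*i)) * kernel p (j + 2*i + 1) j j 0 0" for i
  have "(\<lambda>i. (lam (j + 2*i + 2) - lam (j + 2*i)) / real i powr d * (kernel p (j + 2*i + 1) j j 0 0 / real i powr s))
      \<longlonglongrightarrow> c * k"
    by (intro tendsto_mult lam_diff kernel)
  then have "(\<lambda>i. a i / real i powr (s + d)) \<longlonglongrightarrow> c * k"
    by (simp add: a_def powr_add field_simps)
  then have "(\<lambda>n. sob_alpha p lam j n / real n powr (s + d + 1)) \<longlonglongrightarrow> c * k / (s + d + 1)"
    unfolding sob_alpha_eq_sum_lessThan a_def[symmetric] by (rule sum_powr_asymp[OF sd])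
  then have "(\<lambda>n. lam (j + 2*n) / real n powr (s + d + 1) + M * (sob_alpha p lam j n / real n powr (s + d + 1)))
      \<longlonglongrightarrow> 0 + M * (c * k / (s + d + 1))"
    by (intro tendsto_add tendsto_mult tendsto_const lam)
  then show ?thesis
    by (simp add: lam_tilde_def add_divide_distrib)
qed

lemma lam_tilde_asymp_quadratic:
  fixes e Csq :: real
  assumes lam_form: "\<And>n. lam n = \<gamma> * (real n)\<^sup>2 + \<delta> * real n"
    and e: "2 * e + 1 > 0"
    and kernel: "(\<lambda>i. kernel p (j + 2*i + 1) j j 0 0 / real i powr (2 * e + 1)) \<longlonglongrightarrow> Csq / (2 * e + 1)"
  shows "(\<lambda>n. lam_tilde p lam M j n / real n powr (2 * e + 3))
           \<longlonglongrightarrow> 8 * \<gamma> * M * Csq / ((2 * e + 3) * (2 * e + 1))"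
proof -
  have lam_diff: "lam (j + 2*i + 2) - lam (j + 2*i) = \<gamma> * (4 * real j + 8 * real i + 4) + 2 * \<delta>" for i
    by (simp add: lam_form power2_eq_square algebra_simps)
  have "(\<lambda>i. (lam (j + 2*i + 2) - lam (j + 2*i)) / real i powr 1) \<longlonglongrightarrow> 8 * \<gamma>"
    unfolding lam_diff by real_asymp
  moreover have "(\<lambda>n. lam (j + 2*n) / real n powr (2 * e + 1 + 1 + 1)) \<longlonglongrightarrow> 0"
    unfolding lam_form using e by real_asymp
  ultimately have "(\<lambda>n. lam_tilde p lam M j n / real n powr (2 * e + 1 + 1 + 1))
      \<longlonglongrightarrow> M * (8 * \<gamma> * (Csq / (2 * e + 1)) / (2 * e + 1 + 1 + 1))"
    using e by (intro lam_tilde_asymp kernel) simp_all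
  then show ?thesis
    by (simp add: field_simps)
qed

lemma lam_tilde_asymp_linear:
  fixes e Csq :: real
  assumes lam_form: "\<And>n. lam n = \<delta> * real n"
    and e: "2 * e + 1 > 0"
    and kernel: "(\<lambda>i. kernel p (j + 2*i + 1) j j 0 0 / real i powr (2 * e + 1)) \<longlonglongrightarrow> Csq / (2 * e + 1)"
  shows "(\<lambda>n. lam_tilde p lam M j n / real n powr (2 * (e + 1)))
           \<longlonglongrightarrow> \<delta> * M * Csq / ((e + 1) * (2 * e + 1))"
proof -
  have lam_diff: "lam (j + 2*i + 2) - lam (j + 2*i) = 2 * \<delta>" for i
    by (simp add: lam_form algebra_simps)
  have "(\<lambda>i. (lam (j + 2*i + 2) - lam (j + 2*i)) / real i powr 0) \<longlonglongrightarrow> 2 * \<delta>"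
    unfolding lam_diff by real_asymp
  moreover have "(\<lambda>n. lam (j + 2*n) / real n powr (2 * e + 1 + 0 + 1)) \<longlonglongrightarrow> 0"
    unfolding lam_form using e by real_asymp
  ultimately have limit: "(\<lambda>n. lam_tilde p lam M j n / real n powr (2 * e + 1 + 0 + 1))
      \<longlonglongrightarrow> M * (2 * \<delta> * (Csq / (2 * e + 1)) / (2 * e + 1 + 0 + 1))"
    using e by (intro lam_tilde_asymp kernel) simp_all
  have exponent: "2 * e + 1 + 0 + 1 = 2 * (e + 1)" by simp
  have limit_value: "M * (2 * \<delta> * (Csq / (2 * e + 1)) / (2 * (e + 1))) = \<delta> * M * Csq / ((e + 1) * (2 * e + 1))"
  proof -
    have "e + 1 \<noteq> 0" "2 * e + 1 \<noteq> 0" using e by linarith+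
    then show ?thesis by (simp add: divide_simps)
  qed
  show ?thesis
    using limit unfolding exponent limit_value .
qed

theorem theorem2:
  fixes w :: "real \<Rightarrow> real" and \<mu> :: "real measure"
    and p :: "nat \<Rightarrow> real poly" and \<sigma> \<tau> :: "real poly"
    and lam :: "nat \<Rightarrow> real" and \<gamma> \<delta> M :: real and j r :: nat
    and a1 b1 a2 b2 :: real and C1 C2 :: "nat \<Rightarrow> real"
  assumes w_meas: "w \<in> borel_measurable borel"
    and w_nonneg: "\<And>x. w x \<ge> 0"
    and w_sym: "\<And>x. w (- x) = w x"
    and mu_def: "\<mu> = density lborel (\<lambda>x. ennreal (w x))"
    and deg_p: "\<And>n. degree (p n) = n"
    and orth_int: "\<And>m n. integrable \<mu> (\<lambda>x. poly (p m) x * poly (p n) x)"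
    and orthonormal: "\<And>m n. (\<integral>x. poly (p m) x * poly (p n) x \<partial>\<mu>) = (if m = n then 1 else 0)"
    and deg_sigma: "degree \<sigma> \<le> 2" and deg_tau: "degree \<tau> \<le> 1"
    and eigen: "\<And>n. \<sigma> * pderiv (pderiv (p n)) + \<tau> * pderiv (p n) = smult (lam n) (p n)"
    and lam_form: "\<And>n. lam n = \<gamma> * (real n)\<^sup>2 + \<delta> * real n"
    and M_pos: "M > 0"
    and asym1: "\<And>k. (\<lambda>n. poly ((pderiv ^^ (2*k)) (p (2*n))) 0
                     / (C1 k * (-1) ^ n * real n powr (a1 * real k + b1))) \<longlonglongrightarrow> 1"
    and asym2: "\<And>k. (\<lambda>n. poly ((pderiv ^^ (2*k+1)) (p (2*n+1))) 0
                     / (C2 k * (-1) ^ n * real n powr (a2 * real k + b2))) \<longlonglongrightarrow> 1"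
    and pos1: "\<And>k. 2 * (a1 * real k + b1) + 1 > 0"
    and pos2: "\<And>k. 2 * (a2 * real k + b2) + 1 > 0"
  shows
   "(j = 2*r \<longrightarrow>
      (\<gamma> \<noteq> 0 \<longrightarrow>
        (\<lambda>n. lam_tilde p lam M j n / real n powr (2 * (a1 * real r + b1) + 3))
          \<longlonglongrightarrow> 8 * \<gamma> * M * (C1 r)\<^sup>2
               / ((2 * (a1 * real r + b1) + 3) * (2 * (a1 * real r + b1) + 1))) \<and>
      (\<gamma> = 0 \<longrightarrow>
        (\<lambda>n. lam_tilde p lam M j n / real n powr (2 * (a1 * real r + b1 + 1)))
          \<longlonglongrightarrow> \<delta> * M * (C1 r)\<^sup>2
               / ((a1 * real r + b1 + 1) * (2 * (a1 * real r + b1) + 1)))) \<and>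
    (j = 2*r + 1 \<longrightarrow>
      (\<gamma> \<noteq> 0 \<longrightarrow>
        (\<lambda>n. lam_tilde p lam M j n / real n powr (2 * (a2 * real r + b2) + 3))
          \<longlonglongrightarrow> 8 * \<gamma> * M * (C2 r)\<^sup>2
               / ((2 * (a2 * real r + b2) + 3) * (2 * (a2 * real r + b2) + 1))) \<and>
      (\<gamma> = 0 \<longrightarrow>
        (\<lambda>n. lam_tilde p lam M j n / real n powr (2 * (a2 * real r + b2 + 1)))
          \<longlonglongrightarrow> \<delta> * M * (C2 r)\<^sup>2
               / ((a2 * real r + b2 + 1) * (2 * (a2 * real r + b2) + 1))))"
proof -
  interpret orthonormal_polys \<mu> p
    using deg_p orth_int orthonormal by unfold_locales
  have parity: "pcompose (p n) [:0, -1:] = smult ((-1) ^ n) (p n)" for n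
    by (rule pcompose_p_reflect) (simp add: mu_def integral_density_reflect[OF w_meas w_nonneg w_sym])
  have even: "(\<lambda>l. (poly ((pderiv ^^ (2*r)) (p (2*r + 2*l))) 0)\<^sup>2 / real l powr (2 * (a1 * real r + b1)))
      \<longlonglongrightarrow> (C1 r)\<^sup>2"
    using LIMSEQ_powr_shift[OF LIMSEQ_power2_powr[OF asym1[of r]], of r] by (simp add: algebra_simps)
  have odd: "(\<lambda>l. (poly ((pderiv ^^ (2*r + 1)) (p (2*r + 1 + 2*l))) 0)\<^sup>2 / real l powr (2 * (a2 * real r + b2)))
      \<longlonglongrightarrow> (C2 r)\<^sup>2"
    using LIMSEQ_powr_shift[OF LIMSEQ_power2_powr[OF asym2[of r]], of r] by (simp add: algebra_simps)
  note kernel_even = kernel_diag_0_asymp[OF parity deg_p pos1 even]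
  note kernel_odd = kernel_diag_0_asymp[OF parity deg_p pos2 odd]
  have lam_linear: "\<gamma> = 0 \<Longrightarrow> lam n = \<delta> * real n" for n
    by (simp add: lam_form)
  show ?thesis
    using lam_tilde_asymp_quadratic[OF lam_form pos1 kernel_even]
      lam_tilde_asymp_quadratic[OF lam_form pos2 kernel_odd]
      lam_tilde_asymp_linear[OF lam_linear pos1 kernel_even]
      lam_tilde_asymp_linear[OF lam_linear pos2 kernel_odd]
    by blast
qed

end
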